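(* Let $\mathcal{A}\subseteq\mathcal{B}(\mathcal{H})$ be a von Neumann algebra, $T:\mathcal{A}\to\mathcal{A}$ a Markov operator, and $N\in\mathbb{N}$. If $y\in\mathcal{A}_+$ is a potential for $T^N$, then $\tilde y:=y+T(y)+\dots+T^{N-1}(y)$ is a potential for $T$.
   Context: A Markov operator is a normal completely positive unital linear map on $\mathcal{A}$ ($\mathbbm{1}\in\mathcal{A}$). For a Markov operator $S$, $x\in\mathcal{A}_+$ is $S$-summable if $\sum_{n\ge0}S^n(x)$ converges strongly to an element of $\mathcal{A}_+$, and $y\in\mathcal{A}_+$ is a potential for $S$ if $y=\sum_{n\ge0}S^n(x)$ for some $S$-summable $x\in\mathcal{A}_+$. *)

theory Defs
  imports "HOL-Analysis.Analysis" "HOL-Library.Complex_Order"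
begin

text \<open>A complex Hilbert space is given by a type 'h carrying an additive group
structure, a complex scalar multiplication sc and a complex inner product ip
(conjugate-linear in the first, linear in the second argument), complete w.r.t.
the induced norm.\<close>

definition hnorm :: "('h \<Rightarrow> 'h \<Rightarrow> complex) \<Rightarrow> 'h \<Rightarrow> real" where
  "hnorm ip x = sqrt (Re (ip x x))"

definition complex_hilbert ::
  "(complex \<Rightarrow> 'h::ab_group_add \<Rightarrow> 'h) \<Rightarrow> ('h \<Rightarrow> 'h \<Rightarrow> complex) \<Rightarrow> bool" where
  "complex_hilbert sc ip \<longleftrightarrow>
     (\<forall>x. sc 1 x = x) \<and>
     (\<forall>a b x. sc a (sc b x) = sc (a * b) x) \<and>
     (\<forall>a x y. sc a (x + y) = sc a x + sc a y) \<and>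
     (\<forall>a b x. sc (a + b) x = sc a x + sc b x) \<and>
     (\<forall>x y z. ip x (y + z) = ip x y + ip x z) \<and>
     (\<forall>a x y. ip x (sc a y) = a * ip x y) \<and>
     (\<forall>x y. ip y x = cnj (ip x y)) \<and>
     (\<forall>x. 0 \<le> ip x x) \<and>
     (\<forall>x. ip x x = 0 \<longrightarrow> x = 0) \<and>
     (\<forall>X :: nat \<Rightarrow> 'h.
        (\<forall>e>0. \<exists>M. \<forall>m\<ge>M. \<forall>n\<ge>M. hnorm ip (X m - X n) < e) \<longrightarrow>
        (\<exists>l. (\<lambda>n. hnorm ip (X n - l)) \<longlonglongrightarrow> 0))"

definition bops ::
  "(complex \<Rightarrow> 'h::ab_group_add \<Rightarrow> 'h) \<Rightarrow> ('h \<Rightarrow> 'h \<Rightarrow> complex) \<Rightarrow> ('h \<Rightarrow> 'h) set" where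
  "bops sc ip = {A. (\<forall>x y. A (x + y) = A x + A y) \<and> (\<forall>a x. A (sc a x) = sc a (A x)) \<and>
                    (\<exists>C. \<forall>x. hnorm ip (A x) \<le> C * hnorm ip x)}"

definition hadj :: "('h \<Rightarrow> 'h \<Rightarrow> complex) \<Rightarrow> ('h \<Rightarrow> 'h) \<Rightarrow> ('h \<Rightarrow> 'h)" where
  "hadj ip A = (THE B. \<forall>x y. ip (A x) y = ip x (B y))"

definition commutant ::
  "(complex \<Rightarrow> 'h::ab_group_add \<Rightarrow> 'h) \<Rightarrow> ('h \<Rightarrow> 'h \<Rightarrow> complex) \<Rightarrow> ('h \<Rightarrow> 'h) set \<Rightarrow> ('h \<Rightarrow> 'h) set" where
  "commutant sc ip S = {B \<in> bops sc ip. \<forall>A\<in>S. B \<circ> A = A \<circ> B}"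

text \<open>Von Neumann algebra: a self-adjoint subset of B(H) equal to its bicommutant
(equivalently a unital strongly closed *-subalgebra of B(H)).\<close>
definition von_neumann_algebra ::
  "(complex \<Rightarrow> 'h::ab_group_add \<Rightarrow> 'h) \<Rightarrow> ('h \<Rightarrow> 'h \<Rightarrow> complex) \<Rightarrow> ('h \<Rightarrow> 'h) set \<Rightarrow> bool" where
  "von_neumann_algebra sc ip M \<longleftrightarrow>
     complex_hilbert sc ip \<and> M \<subseteq> bops sc ip \<and> (\<forall>A\<in>M. hadj ip A \<in> M) \<and>
     commutant sc ip (commutant sc ip M) = M"

definition pos_op ::
  "(complex \<Rightarrow> 'h::ab_group_add \<Rightarrow> 'h) \<Rightarrow> ('h \<Rightarrow> 'h \<Rightarrow> complex) \<Rightarrow> ('h \<Rightarrow> 'h) \<Rightarrow> bool" where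
  "pos_op sc ip A \<longleftrightarrow> A \<in> bops sc ip \<and> (\<forall>x. 0 \<le> ip x (A x))"

definition pos_part ::
  "(complex \<Rightarrow> 'h::ab_group_add \<Rightarrow> 'h) \<Rightarrow> ('h \<Rightarrow> 'h \<Rightarrow> complex) \<Rightarrow> ('h \<Rightarrow> 'h) set \<Rightarrow> ('h \<Rightarrow> 'h) set" where
  "pos_part sc ip M = {A \<in> M. pos_op sc ip A}"

definition op_le ::
  "(complex \<Rightarrow> 'h::ab_group_add \<Rightarrow> 'h) \<Rightarrow> ('h \<Rightarrow> 'h \<Rightarrow> complex) \<Rightarrow> ('h \<Rightarrow> 'h) \<Rightarrow> ('h \<Rightarrow> 'h) \<Rightarrow> bool" where
  "op_le sc ip A B \<longleftrightarrow> A \<in> bops sc ip \<and> B \<in> bops sc ip \<and> pos_op sc ip (\<lambda>x. B x - A x)"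

definition op_sup ::
  "(complex \<Rightarrow> 'h::ab_group_add \<Rightarrow> 'h) \<Rightarrow> ('h \<Rightarrow> 'h \<Rightarrow> complex) \<Rightarrow> ('h \<Rightarrow> 'h) set \<Rightarrow> ('h \<Rightarrow> 'h) \<Rightarrow> bool" where
  "op_sup sc ip D S \<longleftrightarrow> S \<in> bops sc ip \<and> hadj ip S = S \<and> (\<forall>A\<in>D. op_le sc ip A S) \<and>
     (\<forall>U\<in>bops sc ip. hadj ip U = U \<longrightarrow> (\<forall>A\<in>D. op_le sc ip A U) \<longrightarrow> op_le sc ip S U)"

definition matrix_pos ::
  "('h::ab_group_add \<Rightarrow> 'h \<Rightarrow> complex) \<Rightarrow> nat \<Rightarrow> (nat \<Rightarrow> nat \<Rightarrow> 'h \<Rightarrow> 'h) \<Rightarrow> bool" where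
  "matrix_pos ip n a \<longleftrightarrow> (\<forall>\<xi> :: nat \<Rightarrow> 'h. 0 \<le> (\<Sum>i<n. \<Sum>j<n. ip (\<xi> i) (a i j (\<xi> j))))"

definition markov_operator ::
  "(complex \<Rightarrow> 'h::ab_group_add \<Rightarrow> 'h) \<Rightarrow> ('h \<Rightarrow> 'h \<Rightarrow> complex) \<Rightarrow> ('h \<Rightarrow> 'h) set \<Rightarrow>
   (('h \<Rightarrow> 'h) \<Rightarrow> ('h \<Rightarrow> 'h)) \<Rightarrow> bool" where
  "markov_operator sc ip M T \<longleftrightarrow>
     (\<forall>A\<in>M. T A \<in> M) \<and>
     \<comment> \<open>linear\<close>
     (\<forall>A\<in>M. \<forall>B\<in>M. T (\<lambda>x. A x + B x) = (\<lambda>x. T A x + T B x)) \<and>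
     (\<forall>c. \<forall>A\<in>M. T (\<lambda>x. sc c (A x)) = (\<lambda>x. sc c (T A x))) \<and>
     \<comment> \<open>unital\<close>
     T id = id \<and>
     \<comment> \<open>completely positive\<close>
     (\<forall>n a. (\<forall>i<n. \<forall>j<n. a i j \<in> M) \<longrightarrow> matrix_pos ip n a \<longrightarrow>
             matrix_pos ip n (\<lambda>i j. T (a i j))) \<and>
     \<comment> \<open>normal: preserves suprema of bounded upward directed families of positive elements\<close>
     (\<forall>D S. D \<subseteq> pos_part sc ip M \<longrightarrow> D \<noteq> {} \<longrightarrow>
            (\<forall>A\<in>D. \<forall>B\<in>D. \<exists>C\<in>D. op_le sc ip A C \<and> op_le sc ip B C) \<longrightarrow>
            op_sup sc ip D S \<longrightarrow> op_sup sc ip (T ` D) (T S))"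

definition strong_lim ::
  "('h::ab_group_add \<Rightarrow> 'h \<Rightarrow> complex) \<Rightarrow> (nat \<Rightarrow> 'h \<Rightarrow> 'h) \<Rightarrow> ('h \<Rightarrow> 'h) \<Rightarrow> bool" where
  "strong_lim ip X L \<longleftrightarrow> (\<forall>\<xi>. (\<lambda>n. hnorm ip (X n \<xi> - L \<xi>)) \<longlonglongrightarrow> 0)"

definition summable_to ::
  "(complex \<Rightarrow> 'h::ab_group_add \<Rightarrow> 'h) \<Rightarrow> ('h \<Rightarrow> 'h \<Rightarrow> complex) \<Rightarrow> ('h \<Rightarrow> 'h) set \<Rightarrow>
   (('h \<Rightarrow> 'h) \<Rightarrow> ('h \<Rightarrow> 'h)) \<Rightarrow> ('h \<Rightarrow> 'h) \<Rightarrow> ('h \<Rightarrow> 'h) \<Rightarrow> bool" where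
  "summable_to sc ip M S x y \<longleftrightarrow> x \<in> pos_part sc ip M \<and> y \<in> pos_part sc ip M \<and>
     strong_lim ip (\<lambda>m \<xi>. \<Sum>n<m. (S ^^ n) x \<xi>) y"

definition summable_for ::
  "(complex \<Rightarrow> 'h::ab_group_add \<Rightarrow> 'h) \<Rightarrow> ('h \<Rightarrow> 'h \<Rightarrow> complex) \<Rightarrow> ('h \<Rightarrow> 'h) set \<Rightarrow>
   (('h \<Rightarrow> 'h) \<Rightarrow> ('h \<Rightarrow> 'h)) \<Rightarrow> ('h \<Rightarrow> 'h) \<Rightarrow> bool" where
  "summable_for sc ip M S x \<longleftrightarrow> (\<exists>y. summable_to sc ip M S x y)"

definition potential ::
  "(complex \<Rightarrow> 'h::ab_group_add \<Rightarrow> 'h) \<Rightarrow> ('h \<Rightarrow> 'h \<Rightarrow> complex) \<Rightarrow> ('h \<Rightarrow> 'h) set \<Rightarrow>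
   (('h \<Rightarrow> 'h) \<Rightarrow> ('h \<Rightarrow> 'h)) \<Rightarrow> ('h \<Rightarrow> 'h) \<Rightarrow> bool" where
  "potential sc ip M S y \<longleftrightarrow> y \<in> pos_part sc ip M \<and> (\<exists>x. summable_to sc ip M S x y)"

end

theory Submission
  imports Defs
begin

text \<open>Let \<open>x\<close> be \<open>T\<^sup>N\<close>-summable with sum \<open>y\<close>. Grouping the partial sums of
  \<open>\<Sum>j. T\<^sup>j x\<close> in blocks of length \<open>N\<close> gives \<open>\<Sum>j<N m. T\<^sup>j x = \<Sum>k<N. T\<^sup>k P m\<close>,
  where \<open>P m = \<Sum>n<m. T\<^sup>N\<^sup>n x\<close> increases strongly to \<open>y\<close>. By normality \<open>T\<^sup>k (P m)\<close>
  increases to \<open>T\<^sup>k y\<close>, so these block partial sums converge strongly to \<open>y + \<dots> + T\<^sup>N\<^sup>-\<^sup>1 y\<close>;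
  as all partial sums increase, the whole sequence converges to the same limit. The analytic
  input is Vigier's theorem: an increasing sequence of positive operators converges strongly
  to its supremum, and conversely its strong limit is its supremum.\<close>

lemma nonneg_quadratic_le:
  fixes a c p :: real
  assumes nonneg: "\<And>t. 0 \<le> a - 2 * t * c + t ^ 2 * c * p" and "0 \<le> c" "0 \<le> p"
  shows "c \<le> a * p"
proof (cases "p = 0")
  case True
  have "0 \<le> a - 2 * ((a + 1) / (2 * c)) * c"
    using nonneg[of "(a + 1) / (2 * c)"] True by simp
  with True \<open>0 \<le> c\<close> show ?thesis
    by (cases "c = 0") (simp_all add: field_simps)
next
  case False
  with \<open>0 \<le> p\<close> have "p > 0" by simp
  have "0 \<le> a - 2 * (1 / p) * c + (1 / p) ^ 2 * c * p"
    by (rule nonneg)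
  also have "\<dots> = a - c / p"
    using \<open>p > 0\<close> by (simp add: field_simps power2_eq_square)
  finally show ?thesis
    using \<open>p > 0\<close> by (simp add: divide_le_eq mult.commute)
qed

locale hilbert_space =
  fixes sc :: "complex \<Rightarrow> 'h::ab_group_add \<Rightarrow> 'h" and ip :: "'h \<Rightarrow> 'h \<Rightarrow> complex"
  assumes hilbert: "complex_hilbert sc ip"
begin

abbreviation "hn \<equiv> hnorm ip"

lemma sc_add: "sc a (x + y) = sc a x + sc a y"
  using hilbert unfolding complex_hilbert_def by (elim conjE) blast

lemma ip_add_right: "ip x (y + z) = ip x y + ip x z"
  using hilbert unfolding complex_hilbert_def by (elim conjE) blast

lemma ip_scale_right: "ip x (sc a y) = a * ip x y"
  using hilbert unfolding complex_hilbert_def by (elim conjE) blast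

lemma ip_cnj: "ip y x = cnj (ip x y)"
  using hilbert unfolding complex_hilbert_def by (elim conjE) blast

lemma ip_self_nonneg: "0 \<le> ip x x"
  using hilbert unfolding complex_hilbert_def by (elim conjE) blast

lemma ip_self_eq_0D: "ip x x = 0 \<Longrightarrow> x = 0"
  using hilbert unfolding complex_hilbert_def by (elim conjE) blast

lemma hn_Cauchy_convergent:
  assumes "\<forall>e>0. \<exists>M. \<forall>m\<ge>M. \<forall>n\<ge>M. hn (X m - X n) < e"
  shows "\<exists>l. (\<lambda>n. hn (X n - l)) \<longlonglongrightarrow> 0"
proof -
  have "\<forall>X. (\<forall>e>0. \<exists>M. \<forall>m\<ge>M. \<forall>n\<ge>M. hn (X m - X n) < e) \<longrightarrow>
            (\<exists>l. (\<lambda>n. hn (X n - l)) \<longlonglongrightarrow> 0)"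
    using hilbert unfolding complex_hilbert_def by (elim conjE)
  then show ?thesis using assms by simp
qed

lemma ip_add_left: "ip (x + y) z = ip x z + ip y z"
proof -
  have "ip (x + y) z = cnj (ip z (x + y))" by (rule ip_cnj)
  also have "\<dots> = cnj (ip z x) + cnj (ip z y)" by (simp add: ip_add_right)
  finally show ?thesis using ip_cnj[of x z] ip_cnj[of y z] by simp
qed

lemma ip_zero_right [simp]: "ip x 0 = 0"
  using ip_add_right[of x 0 0] by simp

lemma ip_zero_left [simp]: "ip 0 x = 0"
  using ip_add_left[of 0 0 x] by simp

lemma ip_minus_right: "ip x (- y) = - ip x y"
  using ip_add_right[of x y "- y"] by (simp add: add_eq_0_iff)

lemma ip_minus_left: "ip (- x) y = - ip x y"
  using ip_add_left[of x "- x" y] by (simp add: add_eq_0_iff)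

lemma ip_diff_right: "ip x (y - z) = ip x y - ip x z"
  using ip_add_right[of x y "- z"] by (simp add: ip_minus_right)

lemma ip_diff_left: "ip (x - y) z = ip x z - ip y z"
  using ip_add_left[of x "- y" z] by (simp add: ip_minus_left)

lemma ip_scale_left: "ip (sc a x) y = cnj a * ip x y"
proof -
  have "ip (sc a x) y = cnj (ip y (sc a x))" by (rule ip_cnj)
  also have "\<dots> = cnj a * cnj (ip y x)" by (simp add: ip_scale_right)
  finally show ?thesis using ip_cnj[of x y] by simp
qed

lemma sc_zero_right [simp]: "sc a 0 = 0"
  using sc_add[of a 0 0] by simp

lemma sc_diff: "sc a (x - y) = sc a x - sc a y"
  using sc_add[of a "x - y" y] by (simp add: eq_diff_eq)

lemma ip_self_real: "ip x x = complex_of_real (Re (ip x x))"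
  using ip_self_nonneg[of x] by (simp add: complex_eq_iff less_eq_complex_def)

lemma ip_self_Re_nonneg: "0 \<le> Re (ip x x)"
  using ip_self_nonneg[of x] by (simp add: less_eq_complex_def)

lemma hn_nonneg: "0 \<le> hn x"
  by (simp add: hnorm_def ip_self_Re_nonneg)

lemma hn_power2: "hn x ^ 2 = Re (ip x x)"
  by (simp add: hnorm_def ip_self_Re_nonneg)

lemma hn_eq_0_iff: "hn x = 0 \<longleftrightarrow> x = 0"
proof
  assume "hn x = 0"
  then have "ip x x = 0"
    using hn_power2[of x] ip_self_real[of x] by simp
  then show "x = 0" by (rule ip_self_eq_0D)
qed (simp add: hnorm_def)

lemma hn_minus: "hn (- x) = hn x"
  by (simp add: hnorm_def ip_minus_left ip_minus_right)

lemma hn_commute: "hn (x - y) = hn (y - x)"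
  by (metis hn_minus minus_diff_eq)

lemma hn_scale: "hn (sc a x) = cmod a * hn x"
proof -
  have "ip (sc a x) (sc a x) = cnj a * a * ip x x"
    by (simp add: ip_scale_left ip_scale_right)
  also have "cnj a * a = complex_of_real (cmod a ^ 2)"
    using complex_norm_square[of a] by (simp add: mult.commute)
  finally have "Re (ip (sc a x) (sc a x)) = cmod a ^ 2 * Re (ip x x)"
    by simp
  then show ?thesis
    unfolding hnorm_def by (simp add: real_sqrt_mult)
qed

section \<open>Bounded and positive operators\<close>

lemma bops_add: "A \<in> bops sc ip \<Longrightarrow> A (x + y) = A x + A y"
  by (simp add: bops_def)

lemma bops_scale: "A \<in> bops sc ip \<Longrightarrow> A (sc a x) = sc a (A x)"
  by (simp add: bops_def)

lemma bops_diff: "A \<in> bops sc ip \<Longrightarrow> A (x - y) = A x - A y"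
  by (metis add_diff_cancel bops_add diff_add_cancel)

lemma bops_apply_0: "A \<in> bops sc ip \<Longrightarrow> A 0 = 0"
  using bops_diff[of A 0 0] by simp

lemma bops_bound: "A \<in> bops sc ip \<Longrightarrow> \<exists>C\<ge>0. \<forall>x. hn (A x) \<le> C * hn x"
proof -
  assume "A \<in> bops sc ip"
  then obtain C where C: "\<forall>x. hn (A x) \<le> C * hn x"
    by (auto simp: bops_def)
  have "C * hn x \<le> max C 0 * hn x" for x
    by (rule mult_right_mono) (auto simp: hn_nonneg)
  with C show ?thesis
    by (intro exI[of _ "max C 0"]) (auto intro: order_trans)
qed

lemma pos_op_bops: "pos_op sc ip D \<Longrightarrow> D \<in> bops sc ip"
  by (simp add: pos_op_def)

lemma pos_op_Im: "pos_op sc ip D \<Longrightarrow> Im (ip x (D x)) = 0"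
  by (simp add: pos_op_def less_eq_complex_def)

lemma pos_op_Re: "pos_op sc ip D \<Longrightarrow> 0 \<le> Re (ip x (D x))"
  by (simp add: pos_op_def less_eq_complex_def)

lemma pos_op_id: "pos_op sc ip id"
  unfolding pos_op_def bops_def by (auto simp: ip_self_nonneg intro: exI[of _ 1])

lemma op_le_Re: "op_le sc ip A B \<Longrightarrow> Re (ip \<xi> (A \<xi>)) \<le> Re (ip \<xi> (B \<xi>))"
  using pos_op_Re[of "\<lambda>x. B x - A x" \<xi>] by (simp add: op_le_def ip_diff_right)

text \<open>Polarization: a form with real diagonal is Hermitian; test it on \<open>a + b\<close> and \<open>a + \<i> b\<close>.\<close>

lemma pos_op_hermitian:
  assumes D: "pos_op sc ip D"
  shows "ip a (D b) = cnj (ip b (D a))"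
proof -
  have B: "D \<in> bops sc ip" using D by (rule pos_op_bops)
  define c where "c = sc \<i> b"
  have e1: "ip (a + b) (D (a + b)) = ip a (D a) + ip a (D b) + ip b (D a) + ip b (D b)"
    by (simp add: bops_add[OF B] ip_add_left ip_add_right)
  have "ip (a + c) (D (a + c)) = ip a (D a) + ip a (D c) + ip c (D a) + ip c (D c)"
    by (simp add: bops_add[OF B] ip_add_left ip_add_right)
  then have e2: "ip (a + c) (D (a + c))
      = ip a (D a) + \<i> * ip a (D b) - \<i> * ip b (D a) + ip b (D b)"
    by (simp add: c_def bops_scale[OF B] ip_scale_left ip_scale_right)
  have "Im (ip a (D b)) + Im (ip b (D a)) = 0" "Re (ip a (D b)) - Re (ip b (D a)) = 0"
    using arg_cong[OF e1, of Im] arg_cong[OF e2, of Im] pos_op_Im[OF D] by auto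
  then show ?thesis
    by (simp add: complex_eq_iff)
qed

lemma pos_op_Cauchy_Schwarz:
  assumes D: "pos_op sc ip D"
  shows "cmod (ip a (D b)) ^ 2 \<le> Re (ip a (D a)) * Re (ip b (D b))"
proof -
  have B: "D \<in> bops sc ip" using D by (rule pos_op_bops)
  define w where "w = ip a (D b)"
  have hba: "ip b (D a) = cnj w"
    unfolding w_def using pos_op_hermitian[OF D, of b a] by simp
  have rb: "ip b (D b) = complex_of_real (Re (ip b (D b)))"
    using pos_op_Im[OF D, of b] by (simp add: complex_eq_iff)
  have ww: "cnj w * w = complex_of_real (cmod w ^ 2)"
    using complex_norm_square[of w] by (simp add: mult.commute)
  have "0 \<le> Re (ip a (D a)) - 2 * t * cmod w ^ 2 + t ^ 2 * cmod w ^ 2 * Re (ip b (D b))"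
    for t :: real
  proof -
    define s where "s = complex_of_real t * cnj w"
    define v where "v = a - sc s b"
    have "ip v (D v) = (ip a (D a) - s * w) - (cnj s * ip b (D a) - cnj s * (s * ip b (D b)))"
      by (simp add: v_def bops_diff[OF B] bops_scale[OF B] ip_diff_left ip_diff_right
          ip_scale_left ip_scale_right w_def right_diff_distrib)
    also have "\<dots> = ip a (D a) - 2 * complex_of_real t * complex_of_real (cmod w ^ 2)
       + complex_of_real (t ^ 2) * complex_of_real (cmod w ^ 2) * complex_of_real (Re (ip b (D b)))"
      unfolding hba
      by (subst rb, simp only: s_def complex_cnj_mult complex_cnj_complex_of_real complex_cnj_cnj
          flip: ww, simp add: algebra_simps power2_eq_square)
    finally have "Re (ip v (D v))
        = Re (ip a (D a)) - 2 * t * cmod w ^ 2 + t ^ 2 * cmod w ^ 2 * Re (ip b (D b))"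
      by simp
    then show ?thesis
      using pos_op_Re[OF D, of v] by simp
  qed
  then show ?thesis
    unfolding w_def[symmetric]
    using nonneg_quadratic_le[of "Re (ip a (D a))" "cmod w ^ 2" "Re (ip b (D b))"] pos_op_Re[OF D, of b]
    by simp
qed

lemma Cauchy_Schwarz: "cmod (ip a b) \<le> hn a * hn b"
proof -
  have "cmod (ip a b) ^ 2 \<le> (hn a * hn b) ^ 2"
    using pos_op_Cauchy_Schwarz[OF pos_op_id, of a b] by (simp add: power_mult_distrib hn_power2)
  then show ?thesis
    by (rule power2_le_imp_le) (simp add: hn_nonneg)
qed

lemma hn_triangle: "hn (x + y) \<le> hn x + hn y"
proof -
  have "hn (x + y) ^ 2 = hn x ^ 2 + hn y ^ 2 + Re (ip x y) + Re (ip y x)"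
    by (simp add: hn_power2 ip_add_left ip_add_right)
  also have "Re (ip y x) = Re (ip x y)"
    using ip_cnj[of y x] by simp
  also have "Re (ip x y) \<le> hn x * hn y"
    using Cauchy_Schwarz[of x y] complex_Re_le_cmod order_trans by blast
  then have "hn x ^ 2 + hn y ^ 2 + Re (ip x y) + Re (ip x y) \<le> (hn x + hn y) ^ 2"
    by (simp add: power2_eq_square algebra_simps)
  finally show ?thesis
    by (rule power2_le_imp_le) (simp add: hn_nonneg add_nonneg_nonneg)
qed

lemma hn_triangle_diff: "hn (x - z) \<le> hn (x - y) + hn (y - z)"
  using hn_triangle[of "x - y" "y - z"] by simp

lemma hn_sum: "hn (\<Sum>i\<in>I. v i) \<le> (\<Sum>i\<in>I. hn (v i))"
proof (induct I rule: infinite_finite_induct)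
  case (insert x F)
  then show ?case using hn_triangle[of "v x" "\<Sum>i\<in>F. v i"] by simp
qed (auto simp: hnorm_def)

lemma hn_tendsto_zero_bound:
  assumes "\<And>m. hn (X m) \<le> g m" "g \<longlonglongrightarrow> 0"
  shows "(\<lambda>m. hn (X m)) \<longlonglongrightarrow> 0"
  using assms(2) by (rule Lim_null_comparison[rotated]) (use assms(1) hn_nonneg in auto)

lemma tendsto_ip_right:
  assumes "(\<lambda>m. hn (X m - l)) \<longlonglongrightarrow> 0"
  shows "(\<lambda>m. ip a (X m)) \<longlonglongrightarrow> ip a l"
proof -
  have "(\<lambda>m. ip a (X m) - ip a l) \<longlonglongrightarrow> 0"
  proof (rule Lim_null_comparison)
    show "\<forall>\<^sub>F m in sequentially. norm (ip a (X m) - ip a l) \<le> hn a * hn (X m - l)"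
      using Cauchy_Schwarz[of a] by (simp add: ip_diff_right[symmetric])
    show "(\<lambda>m. hn a * hn (X m - l)) \<longlonglongrightarrow> 0"
      using tendsto_mult_right_zero[OF assms] by simp
  qed
  then show ?thesis by (simp add: LIM_zero_iff)
qed

lemma hn_limit_unique:
  assumes "(\<lambda>m. hn (X m - a)) \<longlonglongrightarrow> 0" "(\<lambda>m. hn (X m - b)) \<longlonglongrightarrow> 0"
  shows "a = b"
proof -
  have "hn (a - b) \<le> hn (X m - a) + hn (X m - b)" for m
    using hn_triangle_diff[where x=a and y="X m" and z=b] hn_commute[of a "X m"] by simp
  moreover have "(\<lambda>m. hn (X m - a) + hn (X m - b)) \<longlonglongrightarrow> 0"
    using tendsto_add[OF assms] by simp
  ultimately have "hn (a - b) \<le> 0"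
    by (intro tendsto_lowerbound[of _ 0 sequentially]) auto
  then show ?thesis
    using hn_nonneg[of "a - b"] by (simp add: hn_eq_0_iff)
qed

lemma bops_zero: "(\<lambda>x. 0) \<in> bops sc ip"
  unfolding bops_def by (auto simp: hnorm_def intro!: exI[of _ 0])

lemma bops_add_fun:
  assumes A: "A \<in> bops sc ip" and B: "B \<in> bops sc ip"
  shows "(\<lambda>x. A x + B x) \<in> bops sc ip"
proof -
  obtain C1 C2 where C: "\<forall>x. hn (A x) \<le> C1 * hn x" "\<forall>x. hn (B x) \<le> C2 * hn x"
    using A B by (auto simp: bops_def)
  have "hn (A x + B x) \<le> (C1 + C2) * hn x" for x
    using hn_triangle[of "A x" "B x"] C[THEN spec, of x] by (simp add: distrib_right)
  moreover have "A (x + y) + B (x + y) = (A x + B x) + (A y + B y)" for x y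
    by (simp add: bops_add[OF A] bops_add[OF B] algebra_simps)
  moreover have "A (sc a x) + B (sc a x) = sc a (A x + B x)" for a x
    by (simp add: bops_scale[OF A] bops_scale[OF B] sc_add)
  ultimately show ?thesis
    unfolding bops_def by blast
qed

lemma bops_diff_fun:
  assumes A: "A \<in> bops sc ip" and B: "B \<in> bops sc ip"
  shows "(\<lambda>x. A x - B x) \<in> bops sc ip"
proof -
  obtain C1 C2 where C: "\<forall>x. hn (A x) \<le> C1 * hn x" "\<forall>x. hn (B x) \<le> C2 * hn x"
    using A B by (auto simp: bops_def)
  have "hn (A x - B x) \<le> (C1 + C2) * hn x" for x
    using hn_triangle[of "A x" "- B x"] C[THEN spec, of x] by (simp add: distrib_right hn_minus)
  moreover have "A (x + y) - B (x + y) = (A x - B x) + (A y - B y)" for x y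
    by (simp add: bops_add[OF A] bops_add[OF B] algebra_simps)
  moreover have "A (sc a x) - B (sc a x) = sc a (A x - B x)" for a x
    by (simp add: bops_scale[OF A] bops_scale[OF B] sc_diff)
  ultimately show ?thesis
    unfolding bops_def by blast
qed

lemma bops_sum:
  "(\<And>i. i \<in> I \<Longrightarrow> f i \<in> bops sc ip) \<Longrightarrow> (\<lambda>x. \<Sum>i\<in>I. f i x) \<in> bops sc ip"
  by (induct I rule: infinite_finite_induct) (simp_all add: bops_zero bops_add_fun)

lemma pos_op_add:
  "pos_op sc ip A \<Longrightarrow> pos_op sc ip B \<Longrightarrow> pos_op sc ip (\<lambda>x. A x + B x)"
  unfolding pos_op_def by (simp add: bops_add_fun ip_add_right add_nonneg_nonneg)

lemma pos_op_sum:
  "(\<And>i. i \<in> I \<Longrightarrow> pos_op sc ip (f i)) \<Longrightarrow> pos_op sc ip (\<lambda>x. \<Sum>i\<in>I. f i x)"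
proof (induct I rule: infinite_finite_induct)
  case (insert i I)
  then show ?case by (simp add: pos_op_add)
qed (simp_all add: pos_op_def bops_zero)

lemma op_le_trans: "op_le sc ip A B \<Longrightarrow> op_le sc ip B C \<Longrightarrow> op_le sc ip A C"
  unfolding op_le_def
  using pos_op_add[of "\<lambda>x. C x - B x" "\<lambda>x. B x - A x"] by simp

lemma bops_quadratic_form_le:
  assumes "\<forall>x. hn (B x) \<le> C * hn x"
  shows "Re (ip \<eta> (B \<eta>)) \<le> C * hn \<eta> ^ 2"
proof -
  have "Re (ip \<eta> (B \<eta>)) \<le> hn \<eta> * hn (B \<eta>)"
    using complex_Re_le_cmod Cauchy_Schwarz order_trans by blast
  also have "\<dots> \<le> hn \<eta> * (C * hn \<eta>)"
    using assms hn_nonneg by (simp add: mult_left_mono)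
  finally show ?thesis
    by (simp add: power2_eq_square ac_simps)
qed

text \<open>Cauchy--Schwarz for the form of \<open>D\<close>, applied to \<open>D \<xi>\<close> and \<open>\<xi>\<close>.\<close>

lemma pos_op_norm_le:
  assumes D: "pos_op sc ip D" and K: "0 \<le> K"
    and bound: "\<And>\<eta>. Re (ip \<eta> (D \<eta>)) \<le> K * hn \<eta> ^ 2"
  shows "hn (D \<xi>) ^ 2 \<le> K * Re (ip \<xi> (D \<xi>))"
proof -
  define \<eta> where "\<eta> = D \<xi>"
  have "cmod (ip \<eta> (D \<xi>)) = hn \<eta> ^ 2"
    unfolding \<eta>_def hn_power2 by (subst ip_self_real) (simp add: ip_self_Re_nonneg)
  then have "hn \<eta> ^ 2 * hn \<eta> ^ 2 \<le> Re (ip \<eta> (D \<eta>)) * Re (ip \<xi> (D \<xi>))"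
    using pos_op_Cauchy_Schwarz[OF D, of \<eta> \<xi>] by (simp add: power2_eq_square)
  also have "\<dots> \<le> (K * hn \<eta> ^ 2) * Re (ip \<xi> (D \<xi>))"
    using bound[of \<eta>] pos_op_Re[OF D, of \<xi>] by (rule mult_right_mono)
  finally have *: "hn \<eta> ^ 2 * hn \<eta> ^ 2 \<le> hn \<eta> ^ 2 * (K * Re (ip \<xi> (D \<xi>)))"
    by (simp only: ac_simps)
  show ?thesis
  proof (cases "hn \<eta> = 0")
    case True
    then show ?thesis
      using K pos_op_Re[OF D, of \<xi>] by (simp add: \<eta>_def)
  next
    case False
    then have "hn \<eta> ^ 2 > 0"
      using hn_nonneg[of \<eta>] by simp
    with * show ?thesis
      unfolding \<eta>_def using mult_left_le_imp_le by blast
  qed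
qed

lemma op_le_antisym:
  assumes "op_le sc ip A B" "op_le sc ip B A"
  shows "A = B"
proof
  fix \<xi>
  have D: "pos_op sc ip (\<lambda>x. B x - A x)"
    using assms(1) by (simp add: op_le_def)
  have "hn (B \<xi> - A \<xi>) ^ 2 \<le> 0 * Re (ip \<xi> (B \<xi> - A \<xi>))"
    using pos_op_norm_le[OF D, of 0 \<xi>] op_le_Re[OF assms(2)] by (simp add: ip_diff_right)
  then show "A \<xi> = B \<xi>"
    using hn_eq_0_iff[of "B \<xi> - A \<xi>"] by simp
qed

lemma hadj_eqI:
  assumes "\<And>a b. ip (A a) b = ip a (A b)"
  shows "hadj ip A = A"
  unfolding hadj_def
proof (rule the_equality)
  show "\<forall>x z. ip (A x) z = ip x (A z)"
    using assms by blast
next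
  fix B
  assume B: "\<forall>x z. ip (A x) z = ip x (B z)"
  show "B = A"
  proof
    fix z
    have "ip (B z - A z) (B z - A z) = 0"
      using B assms by (simp add: ip_diff_right)
    then show "B z = A z"
      using ip_self_eq_0D[of "B z - A z"] by simp
  qed
qed

lemma nonneg_limit_complex:
  fixes X :: "nat \<Rightarrow> complex"
  assumes "X \<longlonglongrightarrow> l" "eventually (\<lambda>m. 0 \<le> X m) sequentially"
  shows "0 \<le> l"
proof -
  have "eventually (\<lambda>m. 0 \<le> Re (X m)) sequentially"
    using assms(2) by eventually_elim (simp add: less_eq_complex_def)
  with tendsto_Re[OF assms(1)] have "0 \<le> Re l"
    by (rule tendsto_lowerbound) simp
  moreover have "eventually (\<lambda>m. Im (X m) = 0) sequentially"
    using assms(2) by eventually_elim (simp add: less_eq_complex_def)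
  then have "(\<lambda>m. Im (X m)) \<longlonglongrightarrow> 0"
    by (rule tendsto_eventually)
  then have "Im l = 0"
    using tendsto_Im[OF assms(1)] LIMSEQ_unique by blast
  ultimately show ?thesis
    by (simp add: less_eq_complex_def)
qed

lemma strong_lim_ip:
  "strong_lim ip S L \<Longrightarrow> (\<lambda>m. ip a (S m \<xi>)) \<longlonglongrightarrow> ip a (L \<xi>)"
  unfolding strong_lim_def by (rule tendsto_ip_right) simp

section \<open>Monotone convergence of positive operators\<close>

lemma op_sup_strong_lim:
  assumes S: "\<And>m. pos_op sc ip (S m)"
    and mono: "\<And>m m'. m \<le> m' \<Longrightarrow> op_le sc ip (S m) (S m')"
    and lim: "strong_lim ip S L" and L: "L \<in> bops sc ip"
  shows "op_sup sc ip (range S) L"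
proof -
  have "ip (L a) b = ip a (L b)" for a b
  proof -
    have "(\<lambda>m. cnj (ip b (S m a))) \<longlonglongrightarrow> cnj (ip b (L a))"
      using strong_lim_ip[OF lim] by (rule tendsto_cnj)
    moreover have "cnj (ip b (S m a)) = ip a (S m b)" for m
      using pos_op_hermitian[OF S[of m], of a b] by simp
    ultimately have "ip a (L b) = cnj (ip b (L a))"
      using strong_lim_ip[OF lim, of a b] LIMSEQ_unique by auto
    then show ?thesis
      using ip_cnj[of "L a" b] by simp
  qed
  then have "hadj ip L = L"
    by (rule hadj_eqI)
  moreover have "op_le sc ip (S m) L" for m
  proof -
    have "0 \<le> ip \<xi> (L \<xi>) - ip \<xi> (S m \<xi>)" for \<xi>
    proof (rule nonneg_limit_complex)
      show "(\<lambda>m'. ip \<xi> (S m' \<xi>) - ip \<xi> (S m \<xi>)) \<longlonglongrightarrow> ip \<xi> (L \<xi>) - ip \<xi> (S m \<xi>)"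
        by (intro tendsto_diff tendsto_const strong_lim_ip[OF lim])
      show "eventually (\<lambda>m'. 0 \<le> ip \<xi> (S m' \<xi>) - ip \<xi> (S m \<xi>)) sequentially"
        using eventually_ge_at_top[of m]
        by eventually_elim (use mono in \<open>auto simp: op_le_def pos_op_def ip_diff_right\<close>)
    qed
    then show ?thesis
      using L pos_op_bops[OF S] bops_diff_fun[OF L pos_op_bops[OF S]]
      by (simp add: op_le_def pos_op_def ip_diff_right)
  qed
  moreover have "op_le sc ip L U" if U: "U \<in> bops sc ip" "\<forall>A\<in>range S. op_le sc ip A U" for U
  proof -
    have "0 \<le> ip \<xi> (U \<xi>) - ip \<xi> (L \<xi>)" for \<xi>
    proof (rule nonneg_limit_complex)
      show "(\<lambda>m. ip \<xi> (U \<xi>) - ip \<xi> (S m \<xi>)) \<longlonglongrightarrow> ip \<xi> (U \<xi>) - ip \<xi> (L \<xi>)"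
        by (intro tendsto_diff tendsto_const strong_lim_ip[OF lim])
      show "eventually (\<lambda>m. 0 \<le> ip \<xi> (U \<xi>) - ip \<xi> (S m \<xi>)) sequentially"
        using U(2) by (auto simp: op_le_def pos_op_def ip_diff_right)
    qed
    then show ?thesis
      using L U bops_diff_fun[OF U(1) L] by (simp add: op_le_def pos_op_def ip_diff_right)
  qed
  ultimately show ?thesis
    unfolding op_sup_def using L by auto
qed

lemma op_sup_unique: "op_sup sc ip D A \<Longrightarrow> op_sup sc ip D B \<Longrightarrow> A = B"
  unfolding op_sup_def by (blast intro: op_le_antisym)

text \<open>For \<open>m \<le> n\<close>, \<open>hn (S n \<xi> - S m \<xi>)\<^sup>2\<close> is controlled by the increment of the
  increasing bounded sequence \<open>\<langle>\<xi>, S m \<xi>\<rangle>\<close>.\<close>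

lemma mono_bounded_strong_Cauchy:
  fixes S :: "nat \<Rightarrow> 'h \<Rightarrow> 'h"
  assumes S: "\<And>m. pos_op sc ip (S m)"
    and mono: "\<And>m m'. m \<le> m' \<Longrightarrow> op_le sc ip (S m) (S m')"
    and bound: "\<And>m \<eta>. Re (ip \<eta> (S m \<eta>)) \<le> C * hn \<eta> ^ 2" and C: "0 \<le> C"
  shows "\<forall>e>0. \<exists>M. \<forall>m\<ge>M. \<forall>n\<ge>M. hn (S m \<xi> - S n \<xi>) < e"
proof (intro allI impI)
  fix e :: real
  assume e: "e > 0"
  define q where "q m = Re (ip \<xi> (S m \<xi>))" for m
  have increment: "hn (S n \<xi> - S m \<xi>) ^ 2 \<le> C * (q n - q m)" if "m \<le> n" for m n
  proof -
    have D: "pos_op sc ip (\<lambda>x. S n x - S m x)"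
      using mono[OF that] by (simp add: op_le_def)
    have "Re (ip \<eta> (S n \<eta> - S m \<eta>)) \<le> C * hn \<eta> ^ 2" for \<eta>
      using bound[where m=n and \<eta>=\<eta>] pos_op_Re[OF S[of m], of \<eta>] by (simp add: ip_diff_right)
    then show ?thesis
      using pos_op_norm_le[OF D C, of \<xi>] by (simp add: q_def ip_diff_right)
  qed
  have "incseq q"
    unfolding incseq_def q_def using op_le_Re[OF mono] by blast
  then obtain l where "q \<longlonglongrightarrow> l"
    using incseq_convergent[of q "C * hn \<xi> ^ 2"] bound unfolding q_def by blast
  then have "Cauchy q"
    by (rule LIMSEQ_imp_Cauchy)
  moreover have "e ^ 2 / (C + 1) > 0"
    using e C by simp
  ultimately obtain M where M: "\<forall>m\<ge>M. \<forall>n\<ge>M. norm (q m - q n) < e ^ 2 / (C + 1)"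
    by (meson CauchyD)
  have close: "hn (S n \<xi> - S m \<xi>) < e" if "M \<le> m" "m \<le> n" for m n
  proof -
    have "hn (S n \<xi> - S m \<xi>) ^ 2 \<le> C * (e ^ 2 / (C + 1))"
      using increment[OF that(2)] M that C
      by (smt (verit, best) mult_left_mono real_norm_def order_trans)
    also have "\<dots> < e ^ 2"
      using C e by (simp add: field_simps)
    finally show ?thesis
      by (rule power2_less_imp_less) (use e in simp)
  qed
  show "\<exists>M. \<forall>m\<ge>M. \<forall>n\<ge>M. hn (S m \<xi> - S n \<xi>) < e"
    by (metis close hn_commute nat_le_linear)
qed

lemma strong_lim_bops:
  assumes S: "\<And>m. S m \<in> bops sc ip" and bound: "\<And>m x. hn (S m x) \<le> C * hn x"
    and lim: "strong_lim ip S L"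
  shows "L \<in> bops sc ip"
proof -
  have L: "(\<lambda>m. hn (S m x - L x)) \<longlonglongrightarrow> 0" for x
    using lim by (simp add: strong_lim_def)
  have "L (a + b) = L a + L b" for a b
  proof (rule hn_limit_unique[OF L])
    show "(\<lambda>m. hn (S m (a + b) - (L a + L b))) \<longlonglongrightarrow> 0"
    proof (rule hn_tendsto_zero_bound)
      show "hn (S m (a + b) - (L a + L b)) \<le> hn (S m a - L a) + hn (S m b - L b)" for m
        using hn_triangle[of "S m a - L a" "S m b - L b"] by (simp add: bops_add[OF S] algebra_simps)
      show "(\<lambda>m. hn (S m a - L a) + hn (S m b - L b)) \<longlonglongrightarrow> 0"
        using tendsto_add[OF L L] by simp
    qed
  qed
  moreover have "L (sc c a) = sc c (L a)" for c a
  proof (rule hn_limit_unique[OF L])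
    show "(\<lambda>m. hn (S m (sc c a) - sc c (L a))) \<longlonglongrightarrow> 0"
    proof (rule hn_tendsto_zero_bound)
      show "hn (S m (sc c a) - sc c (L a)) \<le> cmod c * hn (S m a - L a)" for m
        using hn_scale[of c "S m a - L a"] by (simp add: bops_scale[OF S] sc_diff)
      show "(\<lambda>m. cmod c * hn (S m a - L a)) \<longlonglongrightarrow> 0"
        using tendsto_mult_right_zero[OF L] by simp
    qed
  qed
  moreover have "hn (L x) \<le> C * hn x" for x
  proof -
    have "hn (L x) \<le> C * hn x + hn (S m x - L x)" for m
      using hn_triangle_diff[where x="L x" and y="S m x" and z=0] bound[of m x]
        hn_commute[of "L x" "S m x"] by simp
    moreover have "(\<lambda>m. C * hn x + hn (S m x - L x)) \<longlonglongrightarrow> C * hn x + 0"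
      by (intro tendsto_add tendsto_const L)
    ultimately show ?thesis
      using tendsto_lowerbound[of _ "C * hn x + 0" sequentially] by fastforce
  qed
  ultimately show ?thesis
    unfolding bops_def by blast
qed

text \<open>Vigier's theorem: the strong limit is built pointwise by completeness and then
  identified with \<open>B\<close> by uniqueness of suprema.\<close>

lemma op_sup_imp_strong_lim:
  assumes S: "\<And>m. pos_op sc ip (S m)"
    and mono: "\<And>m m'. m \<le> m' \<Longrightarrow> op_le sc ip (S m) (S m')"
    and sup: "op_sup sc ip (range S) B"
  shows "strong_lim ip S B"
proof -
  have B: "B \<in> bops sc ip" and le: "\<And>m. op_le sc ip (S m) B"
    using sup by (auto simp: op_sup_def)
  obtain C where C: "0 \<le> C" "\<forall>x. hn (B x) \<le> C * hn x"
    using bops_bound[OF B] by blast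
  have form: "Re (ip \<eta> (S m \<eta>)) \<le> C * hn \<eta> ^ 2" for m \<eta>
    using op_le_Re[OF le] bops_quadratic_form_le[OF C(2)] order_trans by blast
  have "\<forall>\<xi>. \<exists>l. (\<lambda>m. hn (S m \<xi> - l)) \<longlonglongrightarrow> 0"
    using hn_Cauchy_convergent[OF mono_bounded_strong_Cauchy[where S=S, OF S mono form C(1)]] by blast
  then obtain L where lim: "strong_lim ip S L"
    unfolding strong_lim_def by (metis choice)
  have "hn (S m x) \<le> C * hn x" for m x
  proof -
    have "hn (S m x) ^ 2 \<le> C * Re (ip x (S m x))"
      by (rule pos_op_norm_le[OF S C(1) form])
    also have "\<dots> \<le> C * (C * hn x ^ 2)"
      using form[where m=m and \<eta>=x] C(1) by (rule mult_left_mono)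
    also have "\<dots> = (C * hn x) ^ 2"
      by (simp add: power2_eq_square)
    finally show ?thesis
      by (rule power2_le_imp_le) (simp add: C(1) hn_nonneg)
  qed
  then have "L \<in> bops sc ip"
    using strong_lim_bops[OF pos_op_bops[OF S] _ lim] by blast
  with S mono lim have "op_sup sc ip (range S) L"
    by (rule op_sup_strong_lim)
  with sup have "L = B"
    by (rule op_sup_unique[symmetric])
  with lim show ?thesis
    by simp
qed

lemma op_le_partial_sums:
  fixes m m' :: nat
  assumes f: "\<And>n. pos_op sc ip (f n)" and "m \<le> m'"
  shows "op_le sc ip (\<lambda>\<xi>. \<Sum>n<m. f n \<xi>) (\<lambda>\<xi>. \<Sum>n<m'. f n \<xi>)"
proof -
  have "(\<Sum>n<m'. f n \<xi>) - (\<Sum>n<m. f n \<xi>) = (\<Sum>n\<in>{m..<m'}. f n \<xi>)" for \<xi>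
    using sum.atLeastLessThan_concat[of 0 m m' "\<lambda>n. f n \<xi>"] \<open>m \<le> m'\<close>
    by (simp add: atLeast0LessThan diff_eq_eq add.commute)
  moreover have "pos_op sc ip (\<lambda>\<xi>. \<Sum>n\<in>{m..<m'}. f n \<xi>)"
    using f by (intro pos_op_sum)
  ultimately show ?thesis
    unfolding op_le_def using f by (simp add: bops_sum pos_op_bops)
qed

lemma strong_lim_sum:
  assumes "\<And>k. k \<in> I \<Longrightarrow> strong_lim ip (X k) (Y k)"
  shows "strong_lim ip (\<lambda>m \<xi>. \<Sum>k\<in>I. X k m \<xi>) (\<lambda>\<xi>. \<Sum>k\<in>I. Y k \<xi>)"
  unfolding strong_lim_def
proof
  fix \<xi>
  show "(\<lambda>m. hn ((\<Sum>k\<in>I. X k m \<xi>) - (\<Sum>k\<in>I. Y k \<xi>))) \<longlonglongrightarrow> 0"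
  proof (rule hn_tendsto_zero_bound)
    show "hn ((\<Sum>k\<in>I. X k m \<xi>) - (\<Sum>k\<in>I. Y k \<xi>)) \<le> (\<Sum>k\<in>I. hn (X k m \<xi> - Y k \<xi>))" for m
      using hn_sum[of "\<lambda>k. X k m \<xi> - Y k \<xi>" I] by (simp add: sum_subtractf)
    show "(\<lambda>m. \<Sum>k\<in>I. hn (X k m \<xi> - Y k \<xi>)) \<longlonglongrightarrow> 0"
      using assms by (intro tendsto_null_sum) (simp add: strong_lim_def)
  qed
qed

lemma op_sup_cofinal_subseq:
  assumes mono: "\<And>m m'. m \<le> m' \<Longrightarrow> op_le sc ip (S m) (S m')"
    and cofinal: "\<And>m. m \<le> r m"
    and sup: "op_sup sc ip (range (\<lambda>m. S (r m))) L"
  shows "op_sup sc ip (range S) L"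
proof -
  have "op_le sc ip (S m) L" for m
    using op_le_trans[OF mono[OF cofinal[of m]]] sup by (simp add: op_sup_def)
  with sup show ?thesis
    unfolding op_sup_def by auto
qed

end

section \<open>Markov operators on von Neumann algebras\<close>

lemma sum_lessThan_mult_regroup:
  fixes g :: "nat \<Rightarrow> 'a::comm_monoid_add"
  shows "(\<Sum>j<N * m. g j) = (\<Sum>k<N. \<Sum>n<m. g (k + N * n))"
proof -
  have "(\<Sum>j<N * m. g j) = (\<Sum>n<m. \<Sum>j\<in>{n * N..<n * N + N}. g j)"
    using sum.nat_group[of g N m] by (simp add: mult.commute)
  also have "\<dots> = (\<Sum>n<m. \<Sum>k<N. g (k + N * n))"
  proof (rule sum.cong[OF refl])
    fix n
    have "(\<Sum>j\<in>{0 + n * N..<N + n * N}. g j) = (\<Sum>k\<in>{0..<N}. g (k + n * N))"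
      by (rule sum.shift_bounds_nat_ivl)
    then show "(\<Sum>j\<in>{n * N..<n * N + N}. g j) = (\<Sum>k<N. g (k + N * n))"
      by (simp add: atLeast0LessThan add.commute mult.commute)
  qed
  also have "\<dots> = (\<Sum>k<N. \<Sum>n<m. g (k + N * n))"
    by (rule sum.swap)
  finally show ?thesis .
qed

locale markov_on_vna = hilbert_space sc ip
  for sc :: "complex \<Rightarrow> 'h::ab_group_add \<Rightarrow> 'h" and ip +
  fixes M :: "('h \<Rightarrow> 'h) set" and T :: "('h \<Rightarrow> 'h) \<Rightarrow> ('h \<Rightarrow> 'h)"
  assumes vna: "von_neumann_algebra sc ip M" and markov: "markov_operator sc ip M T"
begin

lemma M_bops: "A \<in> M \<Longrightarrow> A \<in> bops sc ip"
  using vna by (auto simp: von_neumann_algebra_def)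

text \<open>\<open>M\<close> is a linear space because it is a commutant.\<close>

lemma M_intro:
  assumes "A \<in> bops sc ip" "\<And>C. C \<in> commutant sc ip M \<Longrightarrow> C \<circ> A = A \<circ> C"
  shows "A \<in> M"
proof -
  have "A \<in> commutant sc ip (commutant sc ip M)"
    using assms unfolding commutant_def[of _ _ "commutant sc ip M"] by auto
  then show ?thesis
    using vna by (simp add: von_neumann_algebra_def)
qed

lemma commutant_commute: "C \<in> commutant sc ip M \<Longrightarrow> A \<in> M \<Longrightarrow> C (A x) = A (C x)"
  unfolding commutant_def by (auto simp: fun_eq_iff)

lemma commutant_bops: "C \<in> commutant sc ip M \<Longrightarrow> C \<in> bops sc ip"
  unfolding commutant_def by auto

lemma M_zero: "(\<lambda>x. 0) \<in> M"
proof (rule M_intro[OF bops_zero])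
  fix C
  assume "C \<in> commutant sc ip M"
  then show "C \<circ> (\<lambda>x. 0) = (\<lambda>x. 0) \<circ> C"
    using bops_apply_0[OF commutant_bops] by (auto simp: fun_eq_iff)
qed

lemma M_add:
  assumes A: "A \<in> M" and B: "B \<in> M"
  shows "(\<lambda>x. A x + B x) \<in> M"
proof (rule M_intro[OF bops_add_fun[OF M_bops[OF A] M_bops[OF B]]])
  fix C
  assume C: "C \<in> commutant sc ip M"
  show "C \<circ> (\<lambda>x. A x + B x) = (\<lambda>x. A x + B x) \<circ> C"
    using commutant_commute[OF C A] commutant_commute[OF C B] bops_add[OF commutant_bops[OF C]]
    by (auto simp: fun_eq_iff)
qed

lemma M_diff:
  assumes A: "A \<in> M" and B: "B \<in> M"
  shows "(\<lambda>x. A x - B x) \<in> M"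
proof (rule M_intro[OF bops_diff_fun[OF M_bops[OF A] M_bops[OF B]]])
  fix C
  assume C: "C \<in> commutant sc ip M"
  show "C \<circ> (\<lambda>x. A x - B x) = (\<lambda>x. A x - B x) \<circ> C"
    using commutant_commute[OF C A] commutant_commute[OF C B] bops_diff[OF commutant_bops[OF C]]
    by (auto simp: fun_eq_iff)
qed

lemma M_sum: "(\<And>i. i \<in> I \<Longrightarrow> f i \<in> M) \<Longrightarrow> (\<lambda>x. \<Sum>i\<in>I. f i x) \<in> M"
  by (induct I rule: infinite_finite_induct) (simp_all add: M_zero M_add)

lemma pos_part_sum:
  "(\<And>i. i \<in> I \<Longrightarrow> f i \<in> pos_part sc ip M) \<Longrightarrow> (\<lambda>x. \<Sum>i\<in>I. f i x) \<in> pos_part sc ip M"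
  unfolding pos_part_def by (simp add: M_sum pos_op_sum)

lemma T_M: "A \<in> M \<Longrightarrow> T A \<in> M"
  using markov by (simp add: markov_operator_def)

lemma T_add: "A \<in> M \<Longrightarrow> B \<in> M \<Longrightarrow> T (\<lambda>x. A x + B x) = (\<lambda>x. T A x + T B x)"
  using markov by (simp add: markov_operator_def)

lemma T_zero: "T (\<lambda>x. 0) = (\<lambda>x. 0)"
  using T_add[OF M_zero M_zero] by (simp add: fun_eq_iff)

lemma T_diff: "A \<in> M \<Longrightarrow> B \<in> M \<Longrightarrow> T (\<lambda>x. A x - B x) = (\<lambda>x. T A x - T B x)"
  using T_add[of B "\<lambda>x. A x - B x"] by (simp add: M_diff fun_eq_iff eq_diff_eq')

lemma T_sum: "(\<And>i. i \<in> I \<Longrightarrow> f i \<in> M) \<Longrightarrow> T (\<lambda>x. \<Sum>i\<in>I. f i x) = (\<lambda>x. \<Sum>i\<in>I. T (f i) x)"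
  by (induct I rule: infinite_finite_induct) (simp_all add: T_zero T_add M_sum)

text \<open>Positivity is complete positivity for \<open>1 \<times> 1\<close> matrices.\<close>

lemma T_pos_part: "A \<in> pos_part sc ip M \<Longrightarrow> T A \<in> pos_part sc ip M"
proof -
  assume A: "A \<in> pos_part sc ip M"
  then have "matrix_pos ip 1 (\<lambda>i j. A)"
    by (simp add: matrix_pos_def pos_part_def pos_op_def)
  then have "matrix_pos ip 1 (\<lambda>i j. T A)"
    using markov A by (simp add: markov_operator_def pos_part_def)
  then have "0 \<le> ip x (T A x)" for x
    unfolding matrix_pos_def by (auto dest: spec[of _ "\<lambda>_. x"])
  with A show ?thesis
    by (simp add: pos_part_def pos_op_def T_M M_bops)
qed

lemma T_mono: "A \<in> M \<Longrightarrow> B \<in> M \<Longrightarrow> op_le sc ip A B \<Longrightarrow> op_le sc ip (T A) (T B)"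
  using T_pos_part[of "\<lambda>x. B x - A x"]
  by (simp add: op_le_def pos_part_def M_diff T_diff T_M M_bops)

lemma T_op_sup:
  assumes "D \<subseteq> pos_part sc ip M" "D \<noteq> {}"
    and "\<And>A B. A \<in> D \<Longrightarrow> B \<in> D \<Longrightarrow> \<exists>C\<in>D. op_le sc ip A C \<and> op_le sc ip B C"
    and "op_sup sc ip D S"
  shows "op_sup sc ip (T ` D) (T S)"
proof -
  have "\<forall>D S. D \<subseteq> pos_part sc ip M \<longrightarrow> D \<noteq> {} \<longrightarrow>
      (\<forall>A\<in>D. \<forall>B\<in>D. \<exists>C\<in>D. op_le sc ip A C \<and> op_le sc ip B C) \<longrightarrow>
      op_sup sc ip D S \<longrightarrow> op_sup sc ip (T ` D) (T S)"
    using markov unfolding markov_operator_def by (elim conjE)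
  with assms show ?thesis
    by simp
qed

lemma funpow_T_M: "A \<in> M \<Longrightarrow> (T ^^ k) A \<in> M"
  by (induct k) (simp_all add: T_M)

lemma funpow_T_pos_part: "A \<in> pos_part sc ip M \<Longrightarrow> (T ^^ k) A \<in> pos_part sc ip M"
  by (induct k) (simp_all add: T_pos_part)

lemma funpow_T_zero: "(T ^^ k) (\<lambda>x. 0) = (\<lambda>x. 0)"
  by (induct k) (simp_all add: T_zero)

lemma funpow_T_sum:
  "(\<And>i. i \<in> I \<Longrightarrow> f i \<in> M) \<Longrightarrow> (T ^^ k) (\<lambda>x. \<Sum>i\<in>I. f i x) = (\<lambda>x. \<Sum>i\<in>I. (T ^^ k) (f i) x)"
  by (induct k) (simp_all add: T_sum funpow_T_M)

lemma funpow_T_mono: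
  "A \<in> M \<Longrightarrow> B \<in> M \<Longrightarrow> op_le sc ip A B \<Longrightarrow> op_le sc ip ((T ^^ k) A) ((T ^^ k) B)"
  by (induct k) (simp_all add: T_mono funpow_T_M)

lemma funpow_T_op_sup:
  fixes S :: "nat \<Rightarrow> 'h \<Rightarrow> 'h"
  assumes S: "\<And>m. S m \<in> pos_part sc ip M"
    and mono: "\<And>m m'. m \<le> m' \<Longrightarrow> op_le sc ip (S m) (S m')"
    and sup: "op_sup sc ip (range S) y"
  shows "op_sup sc ip (range (\<lambda>m. (T ^^ k) (S m))) ((T ^^ k) y)"
proof (induct k)
  case 0
  then show ?case using sup by simp
next
  case (Suc k)
  let ?D = "range (\<lambda>m. (T ^^ k) (S m))"
  have SM: "S m \<in> M" for m
    using S by (simp add: pos_part_def)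
  have "?D \<subseteq> pos_part sc ip M"
    using S funpow_T_pos_part by auto
  moreover have "\<exists>C\<in>?D. op_le sc ip A C \<and> op_le sc ip B C" if AB: "A \<in> ?D" "B \<in> ?D" for A B
  proof -
    obtain a b where "A = (T ^^ k) (S a)" "B = (T ^^ k) (S b)"
      using AB by auto
    then show ?thesis
      using funpow_T_mono[OF SM SM mono, of a "max a b" k] funpow_T_mono[OF SM SM mono, of b "max a b" k]
      by auto
  qed
  ultimately have "op_sup sc ip (T ` ?D) (T ((T ^^ k) y))"
    using Suc by (intro T_op_sup) auto
  moreover have "T ` ?D = range (\<lambda>m. (T ^^ Suc k) (S m))"
    by (auto simp: image_image)
  ultimately show ?case
    by simp
qed

lemma potential_zero: "potential sc ip M T (\<lambda>x. 0)"
proof -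
  have "(\<lambda>x. 0) \<in> pos_part sc ip M"
    using M_zero by (simp add: pos_part_def pos_op_def bops_zero)
  then show ?thesis
    unfolding potential_def summable_to_def strong_lim_def
    by (auto simp: funpow_T_zero hnorm_def)
qed

text \<open>Partial sums of positive terms increase, so a subsequence of them determines the limit.\<close>

lemma summable_to_subseq:
  assumes x: "x \<in> pos_part sc ip M" and z: "z \<in> pos_part sc ip M"
    and "mono r" and cofinal: "\<And>m. m \<le> r m"
    and lim: "strong_lim ip (\<lambda>m \<xi>. \<Sum>j<r m. (T ^^ j) x \<xi>) z"
  shows "summable_to sc ip M T x z"
proof -
  define R where "R J = (\<lambda>\<xi>. \<Sum>j<J. (T ^^ j) x \<xi>)" for J
  have terms: "pos_op sc ip ((T ^^ j) x)" for j
    using funpow_T_pos_part[OF x] by (simp add: pos_part_def)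
  have R: "pos_op sc ip (R J)" for J
    unfolding R_def using terms by (rule pos_op_sum)
  have R_mono: "J \<le> J' \<Longrightarrow> op_le sc ip (R J) (R J')" for J J'
    unfolding R_def using terms by (rule op_le_partial_sums)
  have "op_sup sc ip (range (\<lambda>m. R (r m))) z"
    using R R_mono[OF monoD[OF \<open>mono r\<close>]] lim z
    by (intro op_sup_strong_lim) (auto simp: R_def pos_part_def pos_op_def)
  with R_mono cofinal have "op_sup sc ip (range R) z"
    by (rule op_sup_cofinal_subseq)
  with R R_mono have "strong_lim ip R z"
    by (rule op_sup_imp_strong_lim)
  with x z show ?thesis
    unfolding summable_to_def R_def by simp
qed

lemma strong_lim_block_partial_sums:
  assumes x: "x \<in> pos_part sc ip M" and y: "y \<in> pos_part sc ip M"
    and lim: "strong_lim ip (\<lambda>m \<xi>. \<Sum>n<m. ((T ^^ N) ^^ n) x \<xi>) y"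
  shows "strong_lim ip (\<lambda>m \<xi>. \<Sum>j<N * m. (T ^^ j) x \<xi>) (\<lambda>\<xi>. \<Sum>k<N. (T ^^ k) y \<xi>)"
proof -
  define P where "P m = (\<lambda>\<xi>. \<Sum>n<m. (T ^^ (N * n)) x \<xi>)" for m
  have P: "P m \<in> pos_part sc ip M" for m
    unfolding P_def using x by (intro pos_part_sum funpow_T_pos_part)
  have P_mono: "m \<le> m' \<Longrightarrow> op_le sc ip (P m) (P m')" for m m'
    unfolding P_def using funpow_T_pos_part[OF x]
    by (intro op_le_partial_sums) (simp_all add: pos_part_def)
  have "strong_lim ip P y"
    using lim by (simp add: P_def[abs_def] funpow_mult)
  with P P_mono y have "op_sup sc ip (range P) y"
    by (intro op_sup_strong_lim) (auto simp: pos_part_def pos_op_def)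
  then have "strong_lim ip (\<lambda>m. (T ^^ k) (P m)) ((T ^^ k) y)" for k
    using P funpow_T_pos_part funpow_T_mono[OF _ _ P_mono] funpow_T_op_sup[OF P P_mono]
    by (intro op_sup_imp_strong_lim) (auto simp: pos_part_def)
  then have "strong_lim ip (\<lambda>m \<xi>. \<Sum>k<N. (T ^^ k) (P m) \<xi>) (\<lambda>\<xi>. \<Sum>k<N. (T ^^ k) y \<xi>)"
    by (rule strong_lim_sum)
  moreover have "(T ^^ k) (P m) = (\<lambda>\<xi>. \<Sum>n<m. (T ^^ (k + N * n)) x \<xi>)" for k m
    unfolding P_def using funpow_T_M x
    by (subst funpow_T_sum) (auto simp: pos_part_def funpow_add)
  ultimately show ?thesis
    by (simp add: sum_lessThan_mult_regroup)
qed

end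

theorem proposition3p7:
  fixes sc :: "complex \<Rightarrow> 'h::ab_group_add \<Rightarrow> 'h"
    and ip :: "'h \<Rightarrow> 'h \<Rightarrow> complex"
    and M :: "('h \<Rightarrow> 'h) set"
    and T :: "('h \<Rightarrow> 'h) \<Rightarrow> ('h \<Rightarrow> 'h)"
    and N :: nat
    and y :: "'h \<Rightarrow> 'h"
  assumes "von_neumann_algebra sc ip M"
    and "markov_operator sc ip M T"
    and "potential sc ip M (T ^^ N) y"
  shows "potential sc ip M T (\<lambda>\<xi>. \<Sum>k<N. (T ^^ k) y \<xi>)"
proof -
  interpret markov_on_vna sc ip M T
    using assms(1,2) by unfold_locales (simp_all add: von_neumann_algebra_def)
  obtain x where x: "x \<in> pos_part sc ip M" and y: "y \<in> pos_part sc ip M"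
    and lim: "strong_lim ip (\<lambda>m \<xi>. \<Sum>n<m. ((T ^^ N) ^^ n) x \<xi>) y"
    using assms(3) by (auto simp: potential_def summable_to_def)
  have y': "(\<lambda>\<xi>. \<Sum>k<N. (T ^^ k) y \<xi>) \<in> pos_part sc ip M"
    using y by (intro pos_part_sum funpow_T_pos_part)
  show ?thesis
  proof (cases "N = 0")
    case True
    then show ?thesis
      using potential_zero by simp
  next
    case False
    then have "summable_to sc ip M T x (\<lambda>\<xi>. \<Sum>k<N. (T ^^ k) y \<xi>)"
      using summable_to_subseq[OF x y' _ _ strong_lim_block_partial_sums[OF x y lim]]
      by (simp add: mono_def)
    with y' show ?thesis
      unfolding potential_def by blast
  qed
qed

end
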